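(* Let $((h_n,\psi_n))\subset X_{2l}^{\rm conv}$ be a sequence such that $h_n$ converges to some $h\in\mathcal H_{2l}$ uniformly on compact subsets of $(0,2l)$ and $\psi_n$ converges to some $\psi\in BV(R_{2l})$ in $L^1(R_{2l})$. Then $(h,\psi)\in X_{2l}^{\rm conv}$.
   Context: Let $l>0$, $R_{2l}=(0,2l)\times(-1,1)$ with coordinates $(w_1,w_2)$. $\mathcal H_{2l}=\{h:[0,2l]\to[-1,1]\text{ convex},\ h(w_1)=h(2l-w_1)\ \forall w_1\}$. For $h\in\mathcal H_{2l}$, $SG_h=\{(w_1,w_2)\in R_{2l}:w_2<h(w_1)\}$. $X_{2l}^{\rm conv}=\{(h,\psi):h\in\mathcal H_{2l},\ \psi\in BV(R_{2l},[0,1]),\ \psi=0\text{ a.e. on }R_{2l}\setminus SG_h\}$. *)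

theory Defs
  imports "HOL-Analysis.Analysis"
begin

definition Rect :: "real \<Rightarrow> (real \<times> real) set" where
  "Rect l = {0<..<2*l} \<times> {-1<..<1}"

definition Hconv :: "real \<Rightarrow> (real \<Rightarrow> real) set" where
  "Hconv l = {h. convex_on {0..2*l} h \<and> h ` {0..2*l} \<subseteq> {-1..1}
                 \<and> (\<forall>w\<in>{0..2*l}. h w = h (2*l - w))}"

definition SG :: "real \<Rightarrow> (real \<Rightarrow> real) \<Rightarrow> (real \<times> real) set" where
  "SG l h = {w \<in> Rect l. snd w < h (fst w)}"

definition C1c :: "(real \<times> real) set \<Rightarrow> ((real \<times> real) \<Rightarrow> real) \<Rightarrow> bool" where
  "C1c U f \<longleftrightarrow>
     (\<forall>x. f differentiable (at x)) \<and>
     continuous_on UNIV (\<lambda>x. frechet_derivative f (at x) (1,0)) \<and>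
     continuous_on UNIV (\<lambda>x. frechet_derivative f (at x) (0,1)) \<and>
     (\<exists>K. compact K \<and> K \<subseteq> U \<and> (\<forall>x. x \<notin> K \<longrightarrow> f x = 0))"

definition div2 :: "((real \<times> real) \<Rightarrow> real) \<Rightarrow> ((real \<times> real) \<Rightarrow> real) \<Rightarrow> (real \<times> real) \<Rightarrow> real" where
  "div2 f1 f2 x = frechet_derivative f1 (at x) (1,0) + frechet_derivative f2 (at x) (0,1)"

definition BV :: "(real \<times> real) set \<Rightarrow> ((real \<times> real) \<Rightarrow> real) \<Rightarrow> bool" where
  "BV U \<psi> \<longleftrightarrow> set_integrable lborel U \<psi> \<and>
     (\<exists>C. \<forall>f1 f2. C1c U f1 \<and> C1c U f2 \<and> (\<forall>x. (f1 x)\<^sup>2 + (f2 x)\<^sup>2 \<le> 1) \<longrightarrow>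
        (LINT x:U|lborel. \<psi> x * div2 f1 f2 x) \<le> C)"

definition BV01 :: "(real \<times> real) set \<Rightarrow> ((real \<times> real) \<Rightarrow> real) \<Rightarrow> bool" where
  "BV01 U \<psi> \<longleftrightarrow> BV U \<psi> \<and> (AE x in lborel. x \<in> U \<longrightarrow> \<psi> x \<in> {0..1})"

definition Xconv :: "real \<Rightarrow> (real \<Rightarrow> real) \<Rightarrow> ((real \<times> real) \<Rightarrow> real) \<Rightarrow> bool" where
  "Xconv l h \<psi> \<longleftrightarrow> h \<in> Hconv l \<and> BV01 (Rect l) \<psi> \<and>
     (AE x in lborel. x \<in> Rect l - SG l h \<longrightarrow> \<psi> x = 0)"

end

theory Submission
  imports Defs
begin

text \<open>L1 convergence of \<open>\<psi>\<^sub>n\<close> gives a subsequence converging almost everywhere, so the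
  almost-everywhere constraints \<open>0 \<le> \<psi>\<^sub>n \<le> 1\<close> and \<open>\<psi>\<^sub>n = 0\<close> off \<open>SG(h\<^sub>n)\<close> pass to the limit
  wherever they hold eventually along the subsequence. For a point of the rectangle strictly
  above the graph of \<open>h\<close>, pointwise convergence \<open>h\<^sub>n \<rightarrow> h\<close> puts it eventually above the graph
  of \<open>h\<^sub>n\<close>; the remaining points, on the graph of the continuous function \<open>h\<close>, form a null set.\<close>

lemma AE_off_graph:
  fixes g :: "real \<Rightarrow> real"
  assumes [measurable]: "g \<in> borel_measurable borel"
  shows "AE z in (lborel :: (real \<times> real) measure). snd z \<noteq> g (fst z)"
proof -
  have "AE z in (lborel \<Otimes>\<^sub>M lborel :: (real \<times> real) measure). snd z \<noteq> g (fst z)"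
  proof (rule lborel_pair.AE_pair_measure)
    show "{z \<in> space (lborel \<Otimes>\<^sub>M lborel). snd z \<noteq> g (fst z)} \<in> sets (lborel \<Otimes>\<^sub>M lborel)"
      by measurable
    show "AE x in lborel. AE y in lborel. snd (x, y) \<noteq> g (fst (x, y))"
      by (rule AE_I2) (simp add: AE_lborel_singleton)
  qed
  then show ?thesis
    unfolding lborel_prod .
qed

lemma AE_off_graph_on:
  fixes h :: "real \<Rightarrow> real"
  assumes "open I" "continuous_on I h"
  shows "AE z in (lborel :: (real \<times> real) measure). fst z \<in> I \<longrightarrow> snd z \<noteq> h (fst z)"
proof -
  define g where "g x = (if x \<in> I then h x else 0)" for x
  have "g \<in> borel_measurable borel"
    unfolding g_def using assms
    by (intro borel_measurable_continuous_on_if) (auto intro: continuous_on_const)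
  from AE_off_graph[OF this] show ?thesis
    by eventually_elim (auto simp: g_def)
qed

lemma set_L1_convergence_AE_subseq:
  fixes f :: "nat \<Rightarrow> 'a \<Rightarrow> real"
  assumes "\<And>n. set_integrable M A (f n)" "set_integrable M A g"
    and "(\<lambda>n. LINT x:A|M. \<bar>f n x - g x\<bar>) \<longlonglongrightarrow> 0"
  obtains r where "strict_mono r" "AE x in M. x \<in> A \<longrightarrow> (\<lambda>n. f (r n) x) \<longlonglongrightarrow> g x"
proof -
  define u where "u n x = indicator A x * (f n x - g x)" for n x
  have "integrable M (u n)" for n
    using set_integral_diff(1)[OF assms(1) assms(2)]
    unfolding set_integrable_def u_def by simp
  moreover have "(\<lambda>n. \<integral>x. norm (u n x) \<partial>M) = (\<lambda>n. LINT x:A|M. \<bar>f n x - g x\<bar>)"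
    unfolding set_lebesgue_integral_def u_def
    by (intro ext Bochner_Integration.integral_cong) (auto simp: indicator_def)
  ultimately obtain r where r: "strict_mono r" and "AE x in M. (\<lambda>n. u (r n) x) \<longlonglongrightarrow> 0"
    using tendsto_L1_AE_subseq[of M u] assms(3) by auto
  then have "AE x in M. x \<in> A \<longrightarrow> (\<lambda>n. f (r n) x) \<longlonglongrightarrow> g x"
    by eventually_elim (simp add: u_def LIM_zero_iff)
  with r show thesis
    by (rule that)
qed

lemma AE_limit_in_closed:
  assumes "closed S"
    and "\<And>n. AE x in M. x \<in> B n \<longrightarrow> f n x \<in> S"
    and "AE x in M. x \<in> A \<longrightarrow> (\<forall>\<^sub>F n in sequentially. x \<in> B n)"
    and "AE x in M. x \<in> A \<longrightarrow> (\<lambda>n. f n x) \<longlonglongrightarrow> g x"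
  shows "AE x in M. x \<in> A \<longrightarrow> g x \<in> S"
proof -
  have "AE x in M. \<forall>n. x \<in> B n \<longrightarrow> f n x \<in> S"
    using assms(2) by (subst AE_all_countable) simp
  with assms(3,4) show ?thesis
  proof eventually_elim
    case (elim x)
    show ?case
    proof
      assume "x \<in> A"
      with elim(1,3) have "\<forall>\<^sub>F n in sequentially. f n x \<in> S"
        by (auto elim: eventually_mono)
      with \<open>closed S\<close> \<open>x \<in> A\<close> elim(2) show "g x \<in> S"
        by (auto intro: Lim_in_closed_set)
    qed
  qed
qed

lemma Hconv_continuous_on:
  assumes "h \<in> Hconv l"
  shows "continuous_on {0<..<2*l} h"
proof -
  have "convex_on {0..2*l} h"
    using assms unfolding Hconv_def by blast
  then have "convex_on {0<..<2*l} h"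
    by (rule convex_on_subset) auto
  then show ?thesis
    by (intro convex_on_continuous) auto
qed

lemma eventually_outside_SG:
  assumes "x \<in> Rect l - SG l h" "snd x \<noteq> h (fst x)"
    and "(\<lambda>n. hs n (fst x)) \<longlonglongrightarrow> h (fst x)"
  shows "\<forall>\<^sub>F n in sequentially. x \<in> Rect l - SG l (hs n)"
proof -
  have "h (fst x) < snd x"
    using assms(1,2) by (auto simp: SG_def)
  with assms(3) have "\<forall>\<^sub>F n in sequentially. hs n (fst x) < snd x"
    by (rule order_tendstoD)
  then show ?thesis
    by eventually_elim (use assms(1) in \<open>auto simp: SG_def\<close>)
qed

lemma AE_eventually_outside_SG:
  assumes "continuous_on {0<..<2*l} h"
    and "\<And>w. w \<in> {0<..<2*l} \<Longrightarrow> (\<lambda>n. hs n w) \<longlonglongrightarrow> h w"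
  shows "AE x in lborel. x \<in> Rect l - SG l h \<longrightarrow> (\<forall>\<^sub>F n in sequentially. x \<in> Rect l - SG l (hs n))"
  using AE_off_graph_on[OF open_greaterThanLessThan assms(1)]
proof eventually_elim
  case (elim x)
  show ?case
  proof
    assume x: "x \<in> Rect l - SG l h"
    then have "fst x \<in> {0<..<2*l}"
      by (cases x) (auto simp: Rect_def)
    with x elim assms(2) show "\<forall>\<^sub>F n in sequentially. x \<in> Rect l - SG l (hs n)"
      by (intro eventually_outside_SG) auto
  qed
qed

theorem lemma12p8:
  fixes l :: real and hs :: "nat \<Rightarrow> real \<Rightarrow> real" and h :: "real \<Rightarrow> real"
    and \<psi>s :: "nat \<Rightarrow> (real \<times> real) \<Rightarrow> real" and \<psi> :: "(real \<times> real) \<Rightarrow> real"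
  assumes "l > 0"
    and "\<forall>n. Xconv l (hs n) (\<psi>s n)"
    and "h \<in> Hconv l"
    and "\<forall>K. compact K \<and> K \<subseteq> {0<..<2*l} \<longrightarrow> uniform_limit K hs h sequentially"
    and "BV (Rect l) \<psi>"
    and "(\<lambda>n. LINT x:Rect l|lborel. \<bar>\<psi>s n x - \<psi> x\<bar>) \<longlonglongrightarrow> 0"
  shows "Xconv l h \<psi>"
proof -
  have \<psi>s_integrable: "set_integrable lborel (Rect l) (\<psi>s n)" for n
    using assms(2) unfolding Xconv_def BV01_def BV_def by blast
  have \<psi>s_unit: "AE x in lborel. x \<in> Rect l \<longrightarrow> \<psi>s n x \<in> {0..1}" for n
    using assms(2) unfolding Xconv_def BV01_def by blast
  have \<psi>s_zero: "AE x in lborel. x \<in> Rect l - SG l (hs n) \<longrightarrow> \<psi>s n x \<in> {0}" for n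
    using assms(2) unfolding Xconv_def by simp
  have \<psi>_integrable: "set_integrable lborel (Rect l) \<psi>"
    using assms(5) unfolding BV_def by blast
  obtain r where r: "strict_mono r"
    and lim: "AE x in lborel. x \<in> Rect l \<longrightarrow> (\<lambda>n. \<psi>s (r n) x) \<longlonglongrightarrow> \<psi> x"
    using set_L1_convergence_AE_subseq[OF \<psi>s_integrable \<psi>_integrable assms(6)] by blast
  have "AE x in lborel. x \<in> Rect l \<longrightarrow> \<psi> x \<in> {0..1}"
    by (rule AE_limit_in_closed[where B = "\<lambda>_. Rect l", OF closed_atLeastAtMost \<psi>s_unit _ lim]) simp
  moreover have "(\<lambda>n. hs (r n) w) \<longlonglongrightarrow> h w" if "w \<in> {0<..<2*l}" for w
  proof -
    have "(\<lambda>n. hs n w) \<longlonglongrightarrow> h w"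
      using tendsto_uniform_limitI[OF assms(4)[rule_format, of "{w}"]] that by simp
    then show ?thesis
      using LIMSEQ_subseq_LIMSEQ[OF _ r] unfolding comp_def by blast
  qed
  then have "AE x in lborel. x \<in> Rect l - SG l h \<longrightarrow>
      (\<forall>\<^sub>F n in sequentially. x \<in> Rect l - SG l (hs (r n)))"
    using Hconv_continuous_on[OF assms(3)] by (intro AE_eventually_outside_SG)
  then have "AE x in lborel. x \<in> Rect l - SG l h \<longrightarrow> \<psi> x \<in> {0}"
    by (rule AE_limit_in_closed[OF closed_singleton \<psi>s_zero]) (use lim in \<open>eventually_elim, simp\<close>)
  ultimately show ?thesis
    using assms(3,5) unfolding Xconv_def BV01_def by simp
qed

end
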